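(* Let $(G,X,\Gamma)$ be a $(\mu,\nu)$-path system group containing a $\delta$-constricting element $(g,A)$ with $\delta$-constricting map $\pi_A$, and let $\pi_{uA}$ ($u\in G$) be the translated maps described in the context. For every $\eta\ge0$ there exists $\theta\ge1$ such that for every $\eta$-quasi-convex subgroup $(H,Y)$ of $G$: (I) for every $u\in G$, if $\operatorname{diam}_{uA}(Y)>\theta$ then $uA\subseteq Y^{+\theta}$; (II) for every subgroup $K$ with $H\le K\le G$, if $[K:H]>\theta$ then there exists $k\in K$ with $\operatorname{diam}_{kA}(Y)\le\theta$.
   Context: A path is a rectifiable continuous map $\alpha\colon[a,b]\to X$ parametrised by arc length; it is a $(\kappa,\lambda)$-quasi-geodesic if $d(\alpha(t),\alpha(t'))\le|t-t'|\le\kappa d(\alpha(t),\alpha(t'))+\lambda$. A $(\mu,\nu)$-path system group $(G,X,\Gamma)$ is a group $G$ acting properly by isometries on a geodesic metric space $X$ together with a $G$-invariant collection $\Gamma$ of paths closed under subpaths, such that any two points are joined by an element of $\Gamma$ and every element is a $(\mu,\nu)$-quasi-geodesic. $Y^{+\eta}=\{x: d(x,Y)\le\eta\}$. A subset $Y$ is $\eta$-quasi-convex if every $\gamma\in\Gamma$ with endpoints in $Y$ lies in $Y^{+\eta}$; a subgroup $H$ is $\eta$-quasi-convex, written $(H,Y)$, if $Y$ is $H$-invariant, $\eta$-quasi-convex, and $H$ acts on $Y$ $\eta$-coboundedly (for all $y,y'\in Y$ some $h\in H$ has $d(y,hy')\le\eta$). A map $\pi_A\colon X\to A$ is $\delta$-constricting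 if (CS1) $d(x,\pi_A(x))\le\delta$ for $x\in A$, and (CS2) for all $x,y\in X$ and $\gamma\in\Gamma$ joining them, if $d(\pi_A(x),\pi_A(y))>\delta$ then $\gamma$ meets $B_X(\pi_A(x),\delta)$ and $B_X(\pi_A(y),\delta)$. An element $g$ is $\delta$-constricting, written $(g,A)$, if it has infinite order and $A$ is a $\langle g\rangle$-invariant subset admitting a $\delta$-constricting map $\pi_A$, on which $\langle g\rangle$ acts $\delta$-coboundedly. Translated maps: fix a set $R$ of representatives of $G/\mathrm{Stab}(A)$; for $u\in G$ let $u_0\in R$ with $uA=u_0A$ and set $\pi_{uA}(x)=u_0\pi_A(u_0^{-1}x)$ (a $\delta$-constricting map onto $uA$). $\operatorname{diam}_{uA}(Y)=\operatorname{diam}(\pi_{uA}(Y))$. *)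

theory Defs
  imports "HOL-Analysis.Analysis" "HOL-Algebra.Group_Action"
begin

text \<open>A path is a triple (a, b, alpha) with alpha defined on [a,b].\<close>
type_synonym 'x path = "real \<times> real \<times> (real \<Rightarrow> 'x)"

definition geodesic_space :: "'x::metric_space itself \<Rightarrow> bool" where
  "geodesic_space _ \<longleftrightarrow> (\<forall>x y::'x. \<exists>\<gamma>::real \<Rightarrow> 'x. \<gamma> 0 = x \<and> \<gamma> (dist x y) = y \<and>
      (\<forall>s\<in>{0..dist x y}. \<forall>t\<in>{0..dist x y}. dist (\<gamma> s) (\<gamma> t) = \<bar>s - t\<bar>))"

definition curve_length :: "(real \<Rightarrow> 'x::metric_space) \<Rightarrow> real \<Rightarrow> real \<Rightarrow> ereal" where
  "curve_length \<alpha> s t = (SUP np \<in> {(n, p). p 0 = s \<and> p n = t \<and> (\<forall>i<n. p i \<le> p (Suc i))}.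
      ereal (\<Sum>i<fst np. dist (\<alpha> (snd np i)) (\<alpha> (snd np (Suc i)))))"

definition arc_length_path :: "'x::metric_space path \<Rightarrow> bool" where
  "arc_length_path p \<longleftrightarrow> (case p of (a, b, \<alpha>) \<Rightarrow> a \<le> b \<and> continuous_on {a..b} \<alpha> \<and>
      (\<forall>s t. a \<le> s \<longrightarrow> s \<le> t \<longrightarrow> t \<le> b \<longrightarrow> curve_length \<alpha> s t = ereal (t - s)))"

definition quasi_geodesic :: "real \<Rightarrow> real \<Rightarrow> 'x::metric_space path \<Rightarrow> bool" where
  "quasi_geodesic \<kappa> lam p \<longleftrightarrow> arc_length_path p \<and> (case p of (a, b, \<alpha>) \<Rightarrow>
      (\<forall>t\<in>{a..b}. \<forall>t'\<in>{a..b}. dist (\<alpha> t) (\<alpha> t') \<le> \<bar>t - t'\<bar> \<and>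
          \<bar>t - t'\<bar> \<le> \<kappa> * dist (\<alpha> t) (\<alpha> t') + lam))"

definition path_image_of :: "'x path \<Rightarrow> 'x set" where
  "path_image_of p = (case p of (a, b, \<alpha>) \<Rightarrow> \<alpha> ` {a..b})"

definition joins :: "'x path \<Rightarrow> 'x \<Rightarrow> 'x \<Rightarrow> bool" where
  "joins p x y \<longleftrightarrow> (case p of (a, b, \<alpha>) \<Rightarrow> \<alpha> a = x \<and> \<alpha> b = y)"

definition proper_action :: "('g, 'b) monoid_scheme \<Rightarrow> ('g \<Rightarrow> 'x::metric_space \<Rightarrow> 'x) \<Rightarrow> bool" where
  "proper_action G \<phi> \<longleftrightarrow> (\<forall>x r. finite {g \<in> carrier G. dist x (\<phi> g x) \<le> r})"

definition path_system_group ::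
  "('g, 'b) monoid_scheme \<Rightarrow> ('g \<Rightarrow> 'x::metric_space \<Rightarrow> 'x) \<Rightarrow> 'x path set \<Rightarrow> real \<Rightarrow> real \<Rightarrow> bool" where
  "path_system_group G \<phi> \<Gamma> \<mu> \<nu> \<longleftrightarrow>
     group G \<and> group_action G UNIV \<phi> \<and>
     (\<forall>g\<in>carrier G. \<forall>x y. dist (\<phi> g x) (\<phi> g y) = dist x y) \<and>
     proper_action G \<phi> \<and> geodesic_space TYPE('x) \<and>
     (\<forall>g\<in>carrier G. \<forall>a b \<alpha>. (a, b, \<alpha>) \<in> \<Gamma> \<longrightarrow> (a, b, \<phi> g \<circ> \<alpha>) \<in> \<Gamma>) \<and>
     (\<forall>a b \<alpha> a' b'. (a, b, \<alpha>) \<in> \<Gamma> \<longrightarrow> a \<le> a' \<longrightarrow> a' \<le> b' \<longrightarrow> b' \<le> b \<longrightarrow> (a', b', \<alpha>) \<in> \<Gamma>) \<and>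
     (\<forall>x y. \<exists>p\<in>\<Gamma>. joins p x y) \<and>
     (\<forall>p\<in>\<Gamma>. quasi_geodesic \<mu> \<nu> p)"

text \<open>Closed eta-neighbourhood Y^{+eta} = {x. d(x,Y) <= eta} (empty if Y is empty).\<close>
definition nbhd :: "'x::metric_space set \<Rightarrow> real \<Rightarrow> 'x set" where
  "nbhd Y \<eta> = {x. Y \<noteq> {} \<and> infdist x Y \<le> \<eta>}"

definition quasi_convex :: "'x::metric_space path set \<Rightarrow> real \<Rightarrow> 'x set \<Rightarrow> bool" where
  "quasi_convex \<Gamma> \<eta> Y \<longleftrightarrow>
     (\<forall>p\<in>\<Gamma>. \<forall>x\<in>Y. \<forall>y\<in>Y. joins p x y \<longrightarrow> path_image_of p \<subseteq> nbhd Y \<eta>)"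

definition quasi_convex_subgroup ::
  "('g, 'b) monoid_scheme \<Rightarrow> ('g \<Rightarrow> 'x::metric_space \<Rightarrow> 'x) \<Rightarrow> 'x path set \<Rightarrow> real \<Rightarrow> 'g set \<Rightarrow> 'x set \<Rightarrow> bool" where
  "quasi_convex_subgroup G \<phi> \<Gamma> \<eta> H Y \<longleftrightarrow>
     subgroup H G \<and> (\<forall>h\<in>H. \<phi> h ` Y \<subseteq> Y) \<and> quasi_convex \<Gamma> \<eta> Y \<and>
     (\<forall>y\<in>Y. \<forall>y'\<in>Y. \<exists>h\<in>H. dist y (\<phi> h y') \<le> \<eta>)"

definition constricting_map :: "'x::metric_space path set \<Rightarrow> real \<Rightarrow> 'x set \<Rightarrow> ('x \<Rightarrow> 'x) \<Rightarrow> bool" where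
  "constricting_map \<Gamma> \<delta> A \<pi> \<longleftrightarrow>
     (\<forall>x. \<pi> x \<in> A) \<and>
     (\<forall>x\<in>A. dist x (\<pi> x) \<le> \<delta>) \<and>
     (\<forall>x y. \<forall>p\<in>\<Gamma>. joins p x y \<longrightarrow> dist (\<pi> x) (\<pi> y) > \<delta> \<longrightarrow>
        path_image_of p \<inter> cball (\<pi> x) \<delta> \<noteq> {} \<and> path_image_of p \<inter> cball (\<pi> y) \<delta> \<noteq> {})"

definition constricting_element ::
  "('g, 'b) monoid_scheme \<Rightarrow> ('g \<Rightarrow> 'x::metric_space \<Rightarrow> 'x) \<Rightarrow> 'x path set \<Rightarrow> real \<Rightarrow> 'g \<Rightarrow> 'x set \<Rightarrow> ('x \<Rightarrow> 'x) \<Rightarrow> bool" where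
  "constricting_element G \<phi> \<Gamma> \<delta> g A \<pi> \<longleftrightarrow>
     g \<in> carrier G \<and> (\<forall>n::nat. n > 0 \<longrightarrow> g [^]\<^bsub>G\<^esub> n \<noteq> \<one>\<^bsub>G\<^esub>) \<and>
     (\<forall>n::int. \<phi> (g [^]\<^bsub>G\<^esub> n) ` A \<subseteq> A) \<and>
     constricting_map \<Gamma> \<delta> A \<pi> \<and>
     (\<forall>a\<in>A. \<forall>a'\<in>A. \<exists>n::int. dist a (\<phi> (g [^]\<^bsub>G\<^esub> n) a') \<le> \<delta>)"

definition stabiliser :: "('g, 'b) monoid_scheme \<Rightarrow> ('g \<Rightarrow> 'x \<Rightarrow> 'x) \<Rightarrow> 'x set \<Rightarrow> 'g set" where
  "stabiliser G \<phi> A = {g \<in> carrier G. \<phi> g ` A = A}"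

definition coset_representatives ::
  "('g, 'b) monoid_scheme \<Rightarrow> ('g \<Rightarrow> 'x \<Rightarrow> 'x) \<Rightarrow> 'x set \<Rightarrow> 'g set \<Rightarrow> bool" where
  "coset_representatives G \<phi> A R \<longleftrightarrow> R \<subseteq> carrier G \<and>
     (\<forall>u\<in>carrier G. \<exists>!u0. u0 \<in> R \<and> u0 \<in> l_coset G u (stabiliser G \<phi> A))"

definition translated_map ::
  "('g, 'b) monoid_scheme \<Rightarrow> ('g \<Rightarrow> 'x \<Rightarrow> 'x) \<Rightarrow> 'x set \<Rightarrow> ('x \<Rightarrow> 'x) \<Rightarrow> 'g set \<Rightarrow> 'g \<Rightarrow> 'x \<Rightarrow> 'x" where
  "translated_map G \<phi> A \<pi> R u x =
     (let u0 = (THE u0. u0 \<in> R \<and> \<phi> u0 ` A = \<phi> u ` A) in \<phi> u0 (\<pi> (\<phi> (inv\<^bsub>G\<^esub> u0) x)))"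

definition ediam :: "'x::metric_space set \<Rightarrow> ereal" where
  "ediam S = (SUP xy \<in> S \<times> S. ereal (dist (fst xy) (snd xy)))"

definition diam_proj ::
  "('g, 'b) monoid_scheme \<Rightarrow> ('g \<Rightarrow> 'x::metric_space \<Rightarrow> 'x) \<Rightarrow> 'x set \<Rightarrow> ('x \<Rightarrow> 'x) \<Rightarrow> 'g set \<Rightarrow> 'g \<Rightarrow> 'x set \<Rightarrow> ereal" where
  "diam_proj G \<phi> A \<pi> R u Y = ediam (translated_map G \<phi> A \<pi> R u ` Y)"

definition subgroup_index :: "('g, 'b) monoid_scheme \<Rightarrow> 'g set \<Rightarrow> 'g set \<Rightarrow> enat" where
  "subgroup_index G K H = (let C = {r_coset G H k | k. k \<in> K} in if finite C then enat (card C) else \<infinity>)"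

end

(*
  If the projections to A of two points of Y are far apart, a path of the system between them
  fellow-travels A over a long stretch, and stays near Y by quasi-convexity.  Sampling this
  stretch gives points y_i of Y near orbit points g^(n_i) a of a fixed a in A, with distinct n_i.
  Choosing h_i in H with h_i y_0 near y_i, the elements g^(-n_0) h_i^(-1) g^(n_i) all move a by a
  bounded amount, so by properness two of them coincide, which puts a nontrivial power g^m into H.
  The powers of g^m preserve Y and shift the chain along the whole axis, so A lies in a bounded
  neighbourhood of Y.  Translating by coset representatives gives (I).  For (II), if every kA with
  k in K had large projection, every point k a would be near Y; as H acts coboundedly on Y, each
  coset Hk then has a representative moving a boundedly, and properness bounds the number of cosets.
*)

theory Submission
  imports Defs "HOL-Algebra.Generated_Groups"
begin

lemma infdist_lessE:
  assumes "Y \<noteq> {}" "infdist x Y < r"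
  obtains y where "y \<in> Y" "dist x y < r"
proof -
  have "(INF a\<in>Y. dist x a) < r" using assms infdist_notempty by metis
  then have "\<exists>a\<in>Y. dist x a < r"
    using assms(1) by (subst (asm) cINF_less_iff) (auto intro: bdd_belowI[where m=0])
  then show ?thesis using that by blast
qed

lemma infdist_image_isometry:
  assumes "\<And>x y. dist (f x) (f y) = dist x y"
  shows "infdist (f x) (f ` Y) = infdist x Y"
  unfolding infdist_def by (simp add: image_image assms)

lemma nbhd_mono: "r \<le> r' \<Longrightarrow> nbhd Y r \<subseteq> nbhd Y r'"
  unfolding nbhd_def by auto

lemma nbhd_if_dist_le: "y \<in> Y \<Longrightarrow> dist x y \<le> r \<Longrightarrow> x \<in> nbhd Y r"
  unfolding nbhd_def using infdist_le2 by blast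

lemma int_sequence_intermediate_value:
  fixes f :: "nat \<Rightarrow> int"
  assumes "\<forall>k<N. \<bar>f (Suc k) - f k\<bar> \<le> B" "min (f 0) (f N) \<le> t" "t \<le> max (f 0) (f N)"
    and "B \<ge> 0"
  shows "\<exists>k\<le>N. \<bar>f k - t\<bar> \<le> B"
  using assms
proof (induction N)
  case 0
  then show ?case by auto
next
  case (Suc N)
  show ?case
  proof (cases "min (f 0) (f N) \<le> t \<and> t \<le> max (f 0) (f N)")
    case True
    then obtain k where "k \<le> N" "\<bar>f k - t\<bar> \<le> B" using Suc by auto
    then show ?thesis using le_SucI by blast
  next
    case False
    then have "\<bar>f (Suc N) - t\<bar> \<le> \<bar>f (Suc N) - f N\<bar>" using Suc.prems(2,3) by linarith
    also have "\<dots> \<le> B" using Suc.prems(1) by auto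
    finally show ?thesis by blast
  qed
qed

lemma mod_shift_between:
  fixes a b n :: int
  assumes "a \<noteq> b"
  shows "min a b \<le> a + (n - a) mod (b - a) \<and> a + (n - a) mod (b - a) \<le> max a b"
proof (cases "a < b")
  case True
  then have "0 \<le> (n - a) mod (b - a)" "(n - a) mod (b - a) < b - a" by simp_all
  then show ?thesis by linarith
next
  case False
  then have "b - a < 0" using assms by simp
  then have "(n - a) mod (b - a) \<le> 0" "b - a < (n - a) mod (b - a)" by (simp_all add: neg_mod_bound)
  then show ?thesis by linarith
qed

locale path_system =
  fixes G :: "('g, 'b) monoid_scheme" (structure) and \<phi> :: "'g \<Rightarrow> 'x::metric_space \<Rightarrow> 'x"
    and \<Gamma> :: "'x path set" and \<mu> \<nu> :: real
  assumes path_system_group: "path_system_group G \<phi> \<Gamma> \<mu> \<nu>"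
begin

sublocale group G
  using path_system_group unfolding path_system_group_def by blast

lemma group_action: "group_action G UNIV \<phi>"
  using path_system_group unfolding path_system_group_def by blast

lemma act_mult: "a \<in> carrier G \<Longrightarrow> b \<in> carrier G \<Longrightarrow> \<phi> (a \<otimes> b) x = \<phi> a (\<phi> b x)"
  using group_action.composition_rule[OF group_action] by blast

lemma act_one [simp]: "\<phi> \<one> x = x"
  using group_action.id_eq_one[OF group_action] by (metis UNIV_I restrict_apply)

lemma act_inv_act [simp]: "a \<in> carrier G \<Longrightarrow> \<phi> (inv a) (\<phi> a x) = x"
  by (metis act_mult act_one inv_closed l_inv)

lemma act_act_inv [simp]: "a \<in> carrier G \<Longrightarrow> \<phi> a (\<phi> (inv a) x) = x"
  by (metis act_mult act_one inv_closed r_inv)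

lemma dist_act [simp]: "a \<in> carrier G \<Longrightarrow> dist (\<phi> a x) (\<phi> a y) = dist x y"
  using path_system_group unfolding path_system_group_def by blast

lemma finite_displacement: "finite {f \<in> carrier G. dist x (\<phi> f x) \<le> r}"
  using path_system_group unfolding path_system_group_def proper_action_def by blast

lemma nbhd_act_iff: "u \<in> carrier G \<Longrightarrow> \<phi> u x \<in> nbhd (\<phi> u ` Y) r \<longleftrightarrow> x \<in> nbhd Y r"
  unfolding nbhd_def by (simp add: infdist_image_isometry)

text \<open>Nonnegative versions of the quasi-geodesic constants, so that all bounds below are
  monotone in the distances involved.\<close>
definition mu where "mu = max \<mu> 1"
definition nu where "nu = max \<nu> 0"

lemma mu_ge_1: "mu \<ge> 1" unfolding mu_def by simp
lemma nu_nonneg: "nu \<ge> 0" unfolding nu_def by simp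

lemma path_quasi_geodesic:
  assumes "(a, b, \<alpha>) \<in> \<Gamma>" "t \<in> {a..b}" "t' \<in> {a..b}"
  shows "dist (\<alpha> t) (\<alpha> t') \<le> \<bar>t - t'\<bar>" "\<bar>t - t'\<bar> \<le> mu * dist (\<alpha> t) (\<alpha> t') + nu"
proof -
  have "quasi_geodesic \<mu> \<nu> (a, b, \<alpha>)"
    using assms(1) path_system_group unfolding path_system_group_def by blast
  then have le: "dist (\<alpha> t) (\<alpha> t') \<le> \<bar>t - t'\<bar>" and ge: "\<bar>t - t'\<bar> \<le> \<mu> * dist (\<alpha> t) (\<alpha> t') + \<nu>"
    using assms(2,3) unfolding quasi_geodesic_def by auto
  show "dist (\<alpha> t) (\<alpha> t') \<le> \<bar>t - t'\<bar>" by (fact le)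
  have "\<mu> * dist (\<alpha> t) (\<alpha> t') \<le> mu * dist (\<alpha> t) (\<alpha> t')"
    unfolding mu_def by (intro mult_right_mono) auto
  then show "\<bar>t - t'\<bar> \<le> mu * dist (\<alpha> t) (\<alpha> t') + nu"
    using ge unfolding nu_def by linarith
qed

lemma path_endpoints_le: "(a, b, \<alpha>) \<in> \<Gamma> \<Longrightarrow> a \<le> b"
  using path_system_group
  unfolding path_system_group_def quasi_geodesic_def arc_length_path_def by fastforce

lemma subpath: "(a, b, \<alpha>) \<in> \<Gamma> \<Longrightarrow> a \<le> s \<Longrightarrow> s \<le> t \<Longrightarrow> t \<le> b \<Longrightarrow> (s, t, \<alpha>) \<in> \<Gamma>"
  using path_system_group unfolding path_system_group_def by blast

lemma path_act: "(a, b, \<alpha>) \<in> \<Gamma> \<Longrightarrow> u \<in> carrier G \<Longrightarrow> (a, b, \<phi> u \<circ> \<alpha>) \<in> \<Gamma>"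
  using path_system_group unfolding path_system_group_def by blast

lemma obtain_path:
  obtains a b \<alpha> where "(a, b, \<alpha>) \<in> \<Gamma>" "\<alpha> a = x" "\<alpha> b = y"
proof -
  obtain p where "p \<in> \<Gamma>" "joins p x y" using path_system_group unfolding path_system_group_def by blast
  then show ?thesis using that unfolding joins_def by (cases p) auto
qed

lemma dist_between_le:
  assumes "(a, b, \<alpha>) \<in> \<Gamma>" "s \<in> {a..b}" "t \<in> {a..b}" "v \<in> {a..b}" "\<bar>t - s\<bar> \<le> \<bar>v - s\<bar>"
    and "dist (\<alpha> s) z \<le> r" "dist (\<alpha> s) (\<alpha> v) \<le> D"
  shows "dist (\<alpha> t) z \<le> mu * D + nu + r"
proof -
  have "dist (\<alpha> t) (\<alpha> s) \<le> \<bar>t - s\<bar>" using path_quasi_geodesic(1)[OF assms(1,3,2)] .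
  also have "\<dots> \<le> \<bar>s - v\<bar>" using assms(5) by linarith
  also have "\<dots> \<le> mu * dist (\<alpha> s) (\<alpha> v) + nu" using path_quasi_geodesic(2)[OF assms(1,2,4)] .
  also have "\<dots> \<le> mu * D + nu" using assms(7) mu_ge_1 by simp
  finally show ?thesis using assms(6) dist_triangle[of "\<alpha> t" z "\<alpha> s"] by linarith
qed

lemma quasi_convex_subgroup_translate:
  assumes qcs: "quasi_convex_subgroup G \<phi> \<Gamma> \<eta> H Y" and u: "u \<in> carrier G"
  shows "quasi_convex_subgroup G \<phi> \<Gamma> \<eta> (u <# H #> inv u) (\<phi> u ` Y)"
  unfolding quasi_convex_subgroup_def
proof (intro conjI ballI)
  have sg: "subgroup H G" and HY: "\<forall>h\<in>H. \<phi> h ` Y \<subseteq> Y" and qc: "quasi_convex \<Gamma> \<eta> Y"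
    and cob: "\<forall>y\<in>Y. \<forall>y'\<in>Y. \<exists>h\<in>H. dist y (\<phi> h y') \<le> \<eta>"
    using qcs unfolding quasi_convex_subgroup_def by auto
  have conj_mem: "u <# H #> inv u = {u \<otimes> h \<otimes> inv u | h. h \<in> H}"
    unfolding l_coset_def r_coset_def by blast
  have act_conj: "\<phi> (u \<otimes> h \<otimes> inv u) (\<phi> u y) = \<phi> u (\<phi> h y)" if "h \<in> H" for h y
    using that u subgroup.mem_carrier[OF sg] by (simp add: act_mult)
  show "subgroup (u <# H #> inv u) G"
    using subgroup_conjugation_is_surj1[of "inv u" H] u sg by simp
  show "\<phi> h' ` \<phi> u ` Y \<subseteq> \<phi> u ` Y" if "h' \<in> u <# H #> inv u" for h'
    using that HY act_conj unfolding conj_mem by fastforce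
  show "quasi_convex \<Gamma> \<eta> (\<phi> u ` Y)"
    unfolding quasi_convex_def
  proof (intro ballI impI subsetI)
    fix p x y z assume p: "p \<in> \<Gamma>" and xy: "x \<in> \<phi> u ` Y" "y \<in> \<phi> u ` Y" and j: "joins p x y"
      and z: "z \<in> path_image_of p"
    obtain a b \<alpha> where pe: "p = (a, b, \<alpha>)" by (cases p) auto
    have "(a, b, \<phi> (inv u) \<circ> \<alpha>) \<in> \<Gamma>" using path_act p u unfolding pe by simp
    moreover have "joins (a, b, \<phi> (inv u) \<circ> \<alpha>) (\<phi> (inv u) x) (\<phi> (inv u) y)"
      using j unfolding pe joins_def by simp
    moreover have "\<phi> (inv u) x \<in> Y" "\<phi> (inv u) y \<in> Y" using xy u by auto
    ultimately have "path_image_of (a, b, \<phi> (inv u) \<circ> \<alpha>) \<subseteq> nbhd Y \<eta>"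
      using qc unfolding quasi_convex_def by blast
    then have "\<phi> (inv u) z \<in> nbhd Y \<eta>" using z unfolding pe path_image_of_def by auto
    then show "z \<in> nbhd (\<phi> u ` Y) \<eta>" using nbhd_act_iff[OF u, of "\<phi> (inv u) z"] u by simp
  qed
  show "\<exists>h'\<in>u <# H #> inv u. dist y (\<phi> h' y') \<le> \<eta>" if yy': "y \<in> \<phi> u ` Y" "y' \<in> \<phi> u ` Y" for y y'
  proof -
    obtain a a' where a: "a \<in> Y" "a' \<in> Y" "y = \<phi> u a" "y' = \<phi> u a'" using yy' by blast
    obtain h where h: "h \<in> H" "dist a (\<phi> h a') \<le> \<eta>" using cob a by blast
    then have "dist y (\<phi> (u \<otimes> h \<otimes> inv u) y') \<le> \<eta>" using a act_conj u by simp
    then show ?thesis using h(1) unfolding conj_mem by blast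
  qed
qed

text \<open>Every coset \<open>H k\<close> with \<open>k \<in> K\<close> has a representative moving \<open>p\<close> a bounded amount, since
  both \<open>k p\<close> and \<open>p\<close> are close to \<open>Y\<close>, on which \<open>H\<close> acts coboundedly.\<close>
lemma subgroup_index_le_card_displacement:
  assumes qcs: "quasi_convex_subgroup G \<phi> \<Gamma> \<eta> H Y" and K: "subgroup K G"
    and near: "\<And>k. k \<in> K \<Longrightarrow> \<phi> k p \<in> nbhd Y C"
  shows "subgroup_index G K H \<le> card {f \<in> carrier G. dist p (\<phi> f p) \<le> 2 * C + 2 + \<eta>}"
proof -
  define F where "F = {f \<in> carrier G. dist p (\<phi> f p) \<le> 2 * C + 2 + \<eta>}"
  have sg: "subgroup H G" and cob: "\<forall>y\<in>Y. \<forall>y'\<in>Y. \<exists>h\<in>H. dist y (\<phi> h y') \<le> \<eta>"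
    using qcs unfolding quasi_convex_subgroup_def by auto
  have HC: "H \<subseteq> carrier G" using sg subgroup.subset by blast
  have KC: "K \<subseteq> carrier G" using K subgroup.subset by blast
  have close_point: "\<exists>y\<in>Y. dist (\<phi> k p) y < C + 1" if "k \<in> K" for k
  proof -
    have "Y \<noteq> {}" "infdist (\<phi> k p) Y < C + 1" using near[OF that] unfolding nbhd_def by auto
    then show ?thesis using infdist_lessE by metis
  qed
  obtain y0 where y0: "y0 \<in> Y" "dist p y0 < C + 1"
    using close_point[OF subgroup.one_closed[OF K]] by auto
  have coset_rep: "\<exists>f\<in>F. H #> k = H #> f" if k: "k \<in> K" for k
  proof -
    have kC: "k \<in> carrier G" using k KC by blast
    obtain y where y: "y \<in> Y" "dist (\<phi> k p) y < C + 1" using close_point[OF k] by blast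
    obtain h where h: "h \<in> H" "dist y (\<phi> h y0) \<le> \<eta>" using cob y(1) y0(1) by blast
    have hC: "h \<in> carrier G" using h HC by blast
    have "dist p (\<phi> (inv h \<otimes> k) p) \<le> dist p y0 + dist y0 (\<phi> (inv h) (\<phi> k p))"
      using dist_triangle[of p _ y0] hC kC by (simp add: act_mult)
    also have "dist y0 (\<phi> (inv h) (\<phi> k p)) = dist (\<phi> h y0) (\<phi> k p)"
      using dist_act[OF hC, of y0 "\<phi> (inv h) (\<phi> k p)"] hC by simp
    also have "\<dots> \<le> dist (\<phi> h y0) y + dist y (\<phi> k p)" by (rule dist_triangle)
    finally have "inv h \<otimes> k \<in> F" using y0(2) h(2) y(2) hC kC unfolding F_def
      by (simp add: dist_commute)
    moreover have "H #> (inv h \<otimes> k) = H #> k"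
      using coset_mult_assoc[OF HC inv_closed[OF hC] kC]
        subgroup.rcos_const[OF sg is_group subgroup.m_inv_closed[OF sg h(1)]] by simp
    ultimately show ?thesis by metis
  qed
  define cosets where "cosets = {r_coset G H k | k. k \<in> K}"
  have finF: "finite F" unfolding F_def by (rule finite_displacement)
  have cosets_F: "cosets \<subseteq> (\<lambda>f. H #> f) ` F" unfolding cosets_def using coset_rep by blast
  then have "finite cosets" using finF finite_surj by blast
  moreover have "card cosets \<le> card F"
    using cosets_F finF by (meson card_image_le card_mono finite_imageI order_trans)
  ultimately show ?thesis unfolding subgroup_index_def Let_def cosets_def[symmetric] F_def by simp
qed

lemma translated_map_eq:
  assumes R: "coset_representatives G \<phi> A R" and u: "u \<in> carrier G"
  obtains u0 where "u0 \<in> carrier G" "\<phi> u0 ` A = \<phi> u ` A"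
    "\<And>x. translated_map G \<phi> A \<pi> R u x = \<phi> u0 (\<pi> (\<phi> (inv u0) x))"
proof -
  have RC: "R \<subseteq> carrier G" using R unfolding coset_representatives_def by blast
  obtain u0 where u0: "u0 \<in> R" "u0 \<in> l_coset G u (stabiliser G \<phi> A)"
    and uq: "\<And>v. v \<in> R \<and> v \<in> l_coset G u (stabiliser G \<phi> A) \<Longrightarrow> v = u0"
    using R u unfolding coset_representatives_def by metis
  obtain s where s: "s \<in> carrier G" "\<phi> s ` A = A" "u0 = u \<otimes> s"
    using u0(2) unfolding l_coset_def stabiliser_def by blast
  have u0C: "u0 \<in> carrier G" using u0(1) RC by blast
  have img: "\<phi> u0 ` A = \<phi> u ` A"
  proof -
    have "\<phi> u0 ` A = \<phi> u ` (\<phi> s ` A)" unfolding s(3) using u s(1) by (simp add: act_mult image_image)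
    then show ?thesis using s(2) by simp
  qed
  have "(THE u0. u0 \<in> R \<and> \<phi> u0 ` A = \<phi> u ` A) = u0"
  proof (rule the_equality)
    show "u0 \<in> R \<and> \<phi> u0 ` A = \<phi> u ` A" using u0(1) img by blast
  next
    fix v assume v: "v \<in> R \<and> \<phi> v ` A = \<phi> u ` A"
    have vC: "v \<in> carrier G" using v RC by blast
    have "\<phi> (inv u \<otimes> v) ` A = \<phi> (inv u) ` (\<phi> v ` A)"
      using u vC by (simp add: act_mult image_image)
    also have "\<dots> = \<phi> (inv u) ` (\<phi> u ` A)" using v by simp
    also have "\<dots> = A" using u by (simp add: image_image)
    finally have "inv u \<otimes> v \<in> stabiliser G \<phi> A" unfolding stabiliser_def using u vC by simp
    moreover have "u \<otimes> (inv u \<otimes> v) = v" using u vC by (simp add: m_assoc[symmetric])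
    ultimately have "v \<in> l_coset G u (stabiliser G \<phi> A)" unfolding l_coset_def by blast
    then show "v = u0" using uq v by blast
  qed
  then show ?thesis using that u0C img unfolding translated_map_def Let_def by simp
qed

end

locale constricting_system = path_system +
  fixes \<delta> :: real and g :: 'g and A :: "'x::metric_space set" and \<pi> :: "'x \<Rightarrow> 'x"
  assumes constricting_element: "constricting_element G \<phi> \<Gamma> \<delta> g A \<pi>"
begin

lemma g_closed [simp]: "g \<in> carrier G"
  using constricting_element unfolding constricting_element_def by blast

lemma constricting_map: "constricting_map \<Gamma> \<delta> A \<pi>"
  using constricting_element unfolding constricting_element_def by blast

lemma proj_in_A: "\<pi> x \<in> A"
  using constricting_map unfolding constricting_map_def by blast

lemma dist_proj_self: "x \<in> A \<Longrightarrow> dist x (\<pi> x) \<le> \<delta>"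
  using constricting_map unfolding constricting_map_def by blast

lemma delta_nonneg: "\<delta> \<ge> 0"
  using dist_proj_self[OF proj_in_A[of undefined]] by (meson order_trans zero_le_dist)

lemma path_meets_proj_balls:
  assumes "(s, t, \<alpha>) \<in> \<Gamma>" "dist (\<pi> (\<alpha> s)) (\<pi> (\<alpha> t)) > \<delta>"
  shows "\<exists>v\<in>{s..t}. dist (\<alpha> v) (\<pi> (\<alpha> s)) \<le> \<delta>" "\<exists>v\<in>{s..t}. dist (\<alpha> v) (\<pi> (\<alpha> t)) \<le> \<delta>"
proof -
  have "path_image_of (s, t, \<alpha>) \<inter> cball (\<pi> (\<alpha> s)) \<delta> \<noteq> {}"
    "path_image_of (s, t, \<alpha>) \<inter> cball (\<pi> (\<alpha> t)) \<delta> \<noteq> {}"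
    using constricting_map assms unfolding constricting_map_def joins_def by blast+
  then show "\<exists>v\<in>{s..t}. dist (\<alpha> v) (\<pi> (\<alpha> s)) \<le> \<delta>" "\<exists>v\<in>{s..t}. dist (\<alpha> v) (\<pi> (\<alpha> t)) \<le> \<delta>"
    unfolding path_image_of_def by (auto simp: dist_commute)
qed

lemma dist_proj_le:
  assumes "a \<in> A" "dist x a \<le> r"
  shows "dist (\<pi> x) a \<le> 2 * \<delta> + mu * r + nu"
proof -
  obtain s0 s1 \<beta> where p: "(s0, s1, \<beta>) \<in> \<Gamma>" "\<beta> s0 = x" "\<beta> s1 = a" by (rule obtain_path)
  have r0: "r \<ge> 0" using assms(2) zero_le_dist order_trans by blast
  have le: "s0 \<le> s1" using path_endpoints_le[OF p(1)] .
  show ?thesis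
  proof (cases "dist (\<pi> x) (\<pi> a) > \<delta>")
    case True
    then obtain v where v: "v \<in> {s0..s1}" "dist (\<beta> v) (\<pi> x) \<le> \<delta>"
      using path_meets_proj_balls(1)[OF p(1)] p(2,3) by auto
    have "dist (\<beta> v) a \<le> mu * r + nu + 0"
      using dist_between_le[OF p(1), of s1 v s0 a 0 r] v le p(2,3) assms(2) by (auto simp: dist_commute)
    moreover have "dist (\<pi> x) a \<le> dist (\<pi> x) (\<beta> v) + dist (\<beta> v) a" by (rule dist_triangle)
    moreover have "dist (\<pi> x) (\<beta> v) \<le> \<delta>" using v(2) by (simp add: dist_commute)
    ultimately show ?thesis using delta_nonneg by linarith
  next
    case False
    have "dist (\<pi> x) a \<le> dist (\<pi> x) (\<pi> a) + dist (\<pi> a) a" by (rule dist_triangle)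
    also have "\<dots> \<le> 2 * \<delta>" using False dist_proj_self[OF assms(1)] by (simp add: dist_commute)
    finally show ?thesis using mu_ge_1 r0 nu_nonneg by (smt (verit) mult_nonneg_nonneg)
  qed
qed

definition proj_dev where "proj_dev = 2 * \<delta> + mu * \<delta> + nu"
definition min_sep where "min_sep = 2 * proj_dev + 2 * \<delta>"
definition track_dist where "track_dist = mu * (3 * \<delta> + proj_dev) + nu + \<delta>"

lemma proj_dev_nonneg: "proj_dev \<ge> 0"
  unfolding proj_dev_def using delta_nonneg mu_ge_1 nu_nonneg by simp

lemma min_sep_ge_delta: "min_sep \<ge> \<delta>"
  unfolding min_sep_def using proj_dev_nonneg delta_nonneg by linarith

lemma track_dist_nonneg: "track_dist \<ge> 0"
  unfolding track_dist_def using delta_nonneg mu_ge_1 nu_nonneg proj_dev_nonneg by simp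

text \<open>With \<open>p = \<pi> (\<alpha> t)\<close>, (CS2) makes the path visit \<open>p\<close> on each side of \<open>t\<close> where \<open>p\<close> is
  \<open>\<delta>\<close>-far from the projection of that endpoint; since \<open>q\<close> and \<open>q'\<close> are far apart this happens
  on at least one side, so \<open>t\<close> lies between two parameters whose points are boundedly close.\<close>
lemma path_tracks_A:
  assumes p: "(a, b, \<alpha>) \<in> \<Gamma>" and st: "a \<le> s" "s \<le> t" "t \<le> u" "u \<le> b"
    and q: "q \<in> A" "q' \<in> A" "dist (\<alpha> s) q \<le> \<delta>" "dist (\<alpha> u) q' \<le> \<delta>" "dist q q' > min_sep"
  shows "\<exists>a'\<in>A. dist (\<alpha> t) a' \<le> track_dist"
proof -
  define p where "p = \<pi> (\<alpha> t)"
  define D where "D = 3 * \<delta> + proj_dev"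
  have s_dev: "dist q (\<pi> (\<alpha> s)) \<le> proj_dev"
    using dist_proj_le[OF q(1,3)] unfolding proj_dev_def by (simp add: dist_commute)
  have u_dev: "dist q' (\<pi> (\<alpha> u)) \<le> proj_dev"
    using dist_proj_le[OF q(2,4)] unfolding proj_dev_def by (simp add: dist_commute)
  have in_ab: "s \<in> {a..b}" "t \<in> {a..b}" "u \<in> {a..b}" using st by auto
  have tri4: "dist x y \<le> dist x z1 + dist z1 z2 + dist z2 z3 + dist z3 y" for x y z1 z2 z3 :: 'x
    using dist_triangle[of x y z1] dist_triangle[of z1 y z2] dist_triangle[of z2 y z3] by linarith
  have track: "dist (\<alpha> t) z \<le> track_dist"
    if "w \<in> {a..b}" "w' \<in> {a..b}" "\<bar>t - w\<bar> \<le> \<bar>w' - w\<bar>" "dist (\<alpha> w) z \<le> \<delta>"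
      "dist (\<alpha> w) (\<alpha> w') \<le> D" for w w' z
    using dist_between_le[OF p that(1) in_ab(2) that(2-5)] unfolding track_dist_def D_def .
  have "dist q q' \<le> dist q (\<pi> (\<alpha> s)) + dist (\<pi> (\<alpha> s)) p + dist p (\<pi> (\<alpha> u)) + dist (\<pi> (\<alpha> u)) q'"
    by (rule tri4)
  then consider "dist (\<pi> (\<alpha> s)) p \<le> \<delta>" "dist p (\<pi> (\<alpha> u)) > \<delta>"
    | "dist p (\<pi> (\<alpha> u)) \<le> \<delta>" "dist (\<pi> (\<alpha> s)) p > \<delta>"
    | "dist (\<pi> (\<alpha> s)) p > \<delta>" "dist p (\<pi> (\<alpha> u)) > \<delta>"
    using s_dev u_dev q(5) dist_commute[of q' "\<pi> (\<alpha> u)"] unfolding min_sep_def by fastforce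
  then show ?thesis
  proof cases
    case 1
    then obtain v where v: "v \<in> {t..u}" "dist (\<alpha> v) p \<le> \<delta>"
      using path_meets_proj_balls(1)[OF subpath[OF p, of t u]] st unfolding p_def by auto
    have "dist (\<alpha> s) (\<alpha> v) \<le> D"
      using tri4[of "\<alpha> s" "\<alpha> v" q "\<pi> (\<alpha> s)" p] q(3) s_dev 1(1) v(2)
      unfolding D_def by (simp add: dist_commute)
    then show ?thesis using track[of s v q] q(1,3) in_ab v st by auto
  next
    case 2
    then obtain v where v: "v \<in> {s..t}" "dist (\<alpha> v) p \<le> \<delta>"
      using path_meets_proj_balls(2)[OF subpath[OF p, of s t]] st unfolding p_def by auto
    have "dist (\<alpha> u) (\<alpha> v) \<le> D"
      using tri4[of "\<alpha> u" "\<alpha> v" q' "\<pi> (\<alpha> u)" p] q(4) u_dev 2(1) v(2)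
      unfolding D_def by (simp add: dist_commute)
    then show ?thesis using track[of u v q'] q(2,4) in_ab v st by auto
  next
    case 3
    obtain v where v: "v \<in> {s..t}" "dist (\<alpha> v) p \<le> \<delta>"
      using 3 path_meets_proj_balls(2)[OF subpath[OF p, of s t]] st unfolding p_def by auto
    obtain v' where v': "v' \<in> {t..u}" "dist (\<alpha> v') p \<le> \<delta>"
      using 3 path_meets_proj_balls(1)[OF subpath[OF p, of t u]] st unfolding p_def by auto
    have "dist (\<alpha> v) (\<alpha> v') \<le> D"
      using v(2) v'(2) dist_triangle[of "\<alpha> v" "\<alpha> v'" p] delta_nonneg proj_dev_nonneg
      unfolding D_def by (simp add: dist_commute)
    then show ?thesis using track[of v v' p] proj_in_A in_ab v v' st unfolding p_def by auto
  qed
qed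

lemma tracking_segment:
  assumes p: "(a, b, \<alpha>) \<in> \<Gamma>" and far: "dist (\<pi> (\<alpha> a)) (\<pi> (\<alpha> b)) > D" "D \<ge> min_sep"
  obtains s u where "a \<le> s" "s \<le> u" "u \<le> b" "u - s \<ge> D - 2 * \<delta>"
    "\<And>t. s \<le> t \<Longrightarrow> t \<le> u \<Longrightarrow> \<exists>a'\<in>A. dist (\<alpha> t) a' \<le> track_dist"
proof -
  have "dist (\<pi> (\<alpha> a)) (\<pi> (\<alpha> b)) > \<delta>" using far min_sep_ge_delta by linarith
  then obtain ta tb where tab: "ta \<in> {a..b}" "dist (\<alpha> ta) (\<pi> (\<alpha> a)) \<le> \<delta>"
    "tb \<in> {a..b}" "dist (\<alpha> tb) (\<pi> (\<alpha> b)) \<le> \<delta>"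
    using path_meets_proj_balls[OF p] by metis
  obtain s u q q' where su: "a \<le> s" "s \<le> u" "u \<le> b" and qq: "q \<in> A" "q' \<in> A"
    "dist (\<alpha> s) q \<le> \<delta>" "dist (\<alpha> u) q' \<le> \<delta>" "dist q q' > D"
  proof (cases "ta \<le> tb")
    case True
    show ?thesis by (rule that[of ta tb "\<pi> (\<alpha> a)" "\<pi> (\<alpha> b)"]) (use True tab far proj_in_A in auto)
  next
    case False
    show ?thesis by (rule that[of tb ta "\<pi> (\<alpha> b)" "\<pi> (\<alpha> a)"])
      (use False tab far proj_in_A in \<open>auto simp: dist_commute\<close>)
  qed
  have "dist q q' \<le> dist q (\<alpha> s) + dist (\<alpha> s) (\<alpha> u) + dist (\<alpha> u) q'"
    using dist_triangle[of q q' "\<alpha> s"] dist_triangle[of "\<alpha> s" q' "\<alpha> u"] by linarith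
  moreover have "dist (\<alpha> s) (\<alpha> u) \<le> \<bar>s - u\<bar>" using path_quasi_geodesic(1)[OF p, of s u] su by auto
  ultimately have "u - s \<ge> D - 2 * \<delta>" using qq(3-5) su(2) by (simp add: dist_commute)
  moreover have "\<exists>a'\<in>A. dist (\<alpha> t) a' \<le> track_dist" if "s \<le> t" "t \<le> u" for t
    using path_tracks_A[OF p su(1) that su(3) qq(1-4)] qq(5) far(2) by linarith
  ultimately show ?thesis using that su by blast
qed

lemma g_pow_inj:
  assumes "g [^] (i::int) = g [^] j"
  shows "i = j"
proof (rule ccontr)
  assume "i \<noteq> j"
  have "g [^] (i - j) = \<one>" "g [^] (j - i) = \<one>" using assms by (simp_all add: int_pow_diff)
  then have "g [^] \<bar>i - j\<bar> = \<one>" by (simp add: abs_if)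
  then have "g [^] nat \<bar>i - j\<bar> = \<one>" by (metis int_pow_int abs_ge_zero int_nat_eq)
  moreover have "nat \<bar>i - j\<bar> > 0" using \<open>i \<noteq> j\<close> by simp
  ultimately show False using constricting_element unfolding constricting_element_def by blast
qed

definition base where "base = (SOME a. a \<in> A)"

lemma base_in_A: "base \<in> A"
  unfolding base_def using proj_in_A by (metis someI)

definition orb :: "int \<Rightarrow> 'x" where "orb n = \<phi> (g [^] n) base"

lemma act_pow_orb: "\<phi> (g [^] m) (orb n) = orb (m + n)"
  unfolding orb_def by (simp add: act_mult int_pow_mult)

lemma dist_orb: "dist (orb i) (orb j) = dist base (orb (j - i))"
proof -
  have "orb j = \<phi> (g [^] i) (orb (j - i))" using act_pow_orb by simp
  moreover have "orb i = \<phi> (g [^] i) base" unfolding orb_def ..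
  ultimately show ?thesis by simp
qed

lemma A_near_orb: "x \<in> A \<Longrightarrow> \<exists>n. dist x (orb n) \<le> \<delta>"
  using constricting_element base_in_A unfolding constricting_element_def orb_def by blast

definition orbit_steps where "orbit_steps r = {j::int. dist base (orb j) \<le> r}"

lemma finite_orbit_steps: "finite (orbit_steps r)"
proof -
  have "(\<lambda>j. g [^] j) ` orbit_steps r \<subseteq> {f \<in> carrier G. dist base (\<phi> f base) \<le> r}"
    unfolding orbit_steps_def orb_def by auto
  then have "finite ((\<lambda>j. g [^] j) ` orbit_steps r)" using finite_displacement finite_subset by blast
  moreover have "inj_on (\<lambda>j. g [^] j) (orbit_steps r)" by (meson inj_onI g_pow_inj)
  ultimately show ?thesis using finite_imageD by blast
qed

definition max_step where "max_step r = Max ((\<lambda>j. nat \<bar>j\<bar>) ` orbit_steps r)"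

lemma abs_le_max_step: "dist base (orb j) \<le> r \<Longrightarrow> \<bar>j\<bar> \<le> int (max_step r)"
proof -
  assume "dist base (orb j) \<le> r"
  then have "nat \<bar>j\<bar> \<le> max_step r"
    unfolding max_step_def using finite_orbit_steps by (intro Max_ge) (auto simp: orbit_steps_def)
  then show ?thesis by simp
qed

definition orbit_spread where
  "orbit_spread N = Max ((\<lambda>j. dist base (orb j)) ` {- int N .. int N})"

lemma dist_orb_le_spread: "\<bar>j\<bar> \<le> int N \<Longrightarrow> dist base (orb j) \<le> orbit_spread N"
  unfolding orbit_spread_def by (intro Max_ge finite_imageI imageI) (auto simp: abs_le_iff)

text \<open>Translating the chain by powers of its period \<open>g\<^sup>m \<in> H\<close>, which preserve \<open>Y\<close>, yields
  points of \<open>Y\<close> near every orbit point \<open>g\<^sup>n base\<close>: reduce \<open>n\<close> modulo \<open>m\<close> into the range of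
  the chain, where a chain index is close by the intermediate value property.\<close>
lemma A_near_Y_of_periodic_chain:
  assumes sg: "subgroup H G" and HY: "\<forall>h\<in>H. \<phi> h ` Y \<subseteq> Y"
    and chain: "\<And>k. k \<le> N \<Longrightarrow> \<exists>y\<in>Y. dist y (orb (c k)) \<le> C"
    and steps: "\<And>k. k < N \<Longrightarrow> dist base (orb (c (Suc k) - c k)) \<le> r"
    and period: "c N \<noteq> c 0" "g [^] (c N - c 0) \<in> H"
  shows "A \<subseteq> nbhd Y (\<delta> + orbit_spread (max_step r) + C)"
proof
  fix x assume "x \<in> A"
  then obtain n where n: "dist x (orb n) \<le> \<delta>" using A_near_orb by blast
  define m where "m = c N - c 0"
  define q where "q = (n - c 0) div m"
  define t where "t = c 0 + (n - c 0) mod m"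
  have "min (c 0) (c N) \<le> t \<and> t \<le> max (c 0) (c N)"
    unfolding t_def m_def using mod_shift_between period(1) by metis
  moreover have "\<forall>k<N. \<bar>c (Suc k) - c k\<bar> \<le> int (max_step r)"
    using steps abs_le_max_step by blast
  ultimately obtain k where k: "k \<le> N" "\<bar>c k - t\<bar> \<le> int (max_step r)"
    using int_sequence_intermediate_value[of N c "int (max_step r)" t] by auto
  obtain y where y: "y \<in> Y" "dist y (orb (c k)) \<le> C" using chain k(1) by blast
  have "g [^] (m * q) = (g [^] m) [^] q" by (simp add: int_pow_pow)
  then have "g [^] (m * q) \<in> H" using subgroup_int_pow_closed[OF sg period(2)] unfolding m_def by simp
  then have y'Y: "\<phi> (g [^] (m * q)) y \<in> Y" using HY y(1) by blast
  have shift: "m * q + c k - n = c k - t"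
    unfolding q_def t_def using mult_div_mod_eq[of m "n - c 0"] by linarith
  have "dist (orb n) (orb (m * q + c k)) = dist base (orb (c k - t))" unfolding dist_orb shift ..
  then have "dist (orb n) (orb (m * q + c k)) \<le> orbit_spread (max_step r)"
    using dist_orb_le_spread[OF k(2)] by simp
  moreover have "dist (orb (m * q + c k)) (\<phi> (g [^] (m * q)) y) \<le> C"
    using y(2) act_pow_orb[of "m * q" "c k", symmetric] by (simp add: dist_commute)
  ultimately have "dist x (\<phi> (g [^] (m * q)) y) \<le> \<delta> + orbit_spread (max_step r) + C"
    using n dist_triangle[of x "\<phi> (g [^] (m * q)) y" "orb n"]
      dist_triangle[of "orb n" "\<phi> (g [^] (m * q)) y" "orb (m * q + c k)"] by linarith
  then show "x \<in> nbhd Y (\<delta> + orbit_spread (max_step r) + C)" by (rule nbhd_if_dist_le[OF y'Y])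
qed

definition spacing where "spacing = mu * (2 * track_dist + 2 * \<delta>) + nu + 1"
definition step_dist where "step_dist = spacing + 2 * track_dist + 2 * \<delta>"
definition chain_dist where "chain_dist \<eta> = \<eta> + 1 + track_dist + \<delta>"

lemma spacing_ge_1: "spacing \<ge> 1"
  unfolding spacing_def using delta_nonneg mu_ge_1 track_dist_nonneg nu_nonneg by simp

lemma param_dist_lt_spacing:
  assumes p: "(a, b, \<alpha>) \<in> \<Gamma>" and "t \<in> {a..b}" "t' \<in> {a..b}"
    and "dist (\<alpha> t) (orb n) \<le> track_dist + \<delta>" "dist (\<alpha> t') (orb n) \<le> track_dist + \<delta>"
  shows "\<bar>t - t'\<bar> < spacing"
proof -
  have "dist (\<alpha> t) (\<alpha> t') \<le> 2 * track_dist + 2 * \<delta>"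
    using assms(4,5) dist_triangle[of "\<alpha> t" "\<alpha> t'" "orb n"] by (simp add: dist_commute)
  then have "mu * dist (\<alpha> t) (\<alpha> t') \<le> mu * (2 * track_dist + 2 * \<delta>)"
    using mu_ge_1 by simp
  then show ?thesis
    using path_quasi_geodesic(2)[OF assms(1-3)] unfolding spacing_def by linarith
qed

lemma near_Y_and_orbit:
  assumes "x \<in> nbhd Y \<eta>" "a' \<in> A" "dist x a' \<le> track_dist"
  obtains y n where "y \<in> Y" "dist x y \<le> \<eta> + 1" "dist x (orb n) \<le> track_dist + \<delta>"
proof -
  have "Y \<noteq> {}" "infdist x Y < \<eta> + 1" using assms(1) unfolding nbhd_def by auto
  then obtain y where y: "y \<in> Y" "dist x y < \<eta> + 1" by (rule infdist_lessE)
  obtain n where "dist a' (orb n) \<le> \<delta>" using A_near_orb[OF assms(2)] by blast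
  then have "dist x (orb n) \<le> track_dist + \<delta>"
    using assms(3) dist_triangle[of x "orb n" a'] by linarith
  then show ?thesis using that y by force
qed

lemma sample_orbit_chain:
  assumes p: "(a, b, \<alpha>) \<in> \<Gamma>" and su: "a \<le> s" "u \<le> b" "real M * spacing \<le> u - s"
    and track: "\<And>t. s \<le> t \<Longrightarrow> t \<le> u \<Longrightarrow> \<exists>a'\<in>A. dist (\<alpha> t) a' \<le> track_dist"
    and near_Y: "\<And>t. s \<le> t \<Longrightarrow> t \<le> u \<Longrightarrow> \<alpha> t \<in> nbhd Y \<eta>"
  obtains c :: "nat \<Rightarrow> int" and y :: "nat \<Rightarrow> 'x" where
    "\<And>i. i \<le> M \<Longrightarrow> y i \<in> Y \<and> dist (y i) (orb (c i)) \<le> chain_dist \<eta>"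
    "\<And>k. k < M \<Longrightarrow> dist base (orb (c (Suc k) - c k)) \<le> step_dist"
    "inj_on c {..M}"
proof -
  define t where "t i = s + real i * spacing" for i :: nat
  have t_in: "s \<le> t i" "t i \<le> u" if "i \<le> M" for i
  proof -
    have "real i * spacing \<le> real M * spacing" using that spacing_ge_1 by (intro mult_right_mono) auto
    moreover have "0 \<le> real i * spacing" using spacing_ge_1 by simp
    ultimately show "s \<le> t i" "t i \<le> u" unfolding t_def using su(3) by linarith+
  qed
  then have t_ab: "t i \<in> {a..b}" if "i \<le> M" for i using that su by fastforce
  have "\<exists>y n. y \<in> Y \<and> dist (\<alpha> (t i)) y \<le> \<eta> + 1 \<and> dist (\<alpha> (t i)) (orb n) \<le> track_dist + \<delta>"
    if i: "i \<le> M" for i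
  proof -
    obtain a' where a': "a' \<in> A" "dist (\<alpha> (t i)) a' \<le> track_dist" using track t_in[OF i] by blast
    show ?thesis by (rule near_Y_and_orbit[OF near_Y[OF t_in[OF i]] a']) blast
  qed
  then obtain y c where yc: "\<And>i. i \<le> M \<Longrightarrow> y i \<in> Y \<and> dist (\<alpha> (t i)) (y i) \<le> \<eta> + 1 \<and>
      dist (\<alpha> (t i)) (orb (c i)) \<le> track_dist + \<delta>"
    by metis
  show ?thesis
  proof (rule that)
    show "y i \<in> Y \<and> dist (y i) (orb (c i)) \<le> chain_dist \<eta>" if "i \<le> M" for i
      using yc[OF that] dist_triangle[of "y i" "orb (c i)" "\<alpha> (t i)"]
      unfolding chain_dist_def by (simp add: dist_commute)
  next
    show "dist base (orb (c (Suc k) - c k)) \<le> step_dist" if k: "k < M" for k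
    proof -
      have "dist (\<alpha> (t k)) (\<alpha> (t (Suc k))) \<le> \<bar>t k - t (Suc k)\<bar>"
        using path_quasi_geodesic(1)[OF p t_ab t_ab] k by simp
      also have "\<dots> = spacing" unfolding t_def using spacing_ge_1 by (simp add: algebra_simps)
      finally have "dist (\<alpha> (t k)) (\<alpha> (t (Suc k))) \<le> spacing" .
      moreover have "dist (orb (c k)) (orb (c (Suc k))) \<le> dist (orb (c k)) (\<alpha> (t k))
          + dist (\<alpha> (t k)) (\<alpha> (t (Suc k))) + dist (\<alpha> (t (Suc k))) (orb (c (Suc k)))"
        using dist_triangle[of "orb (c k)" "orb (c (Suc k))" "\<alpha> (t k)"]
          dist_triangle[of "\<alpha> (t k)" "orb (c (Suc k))" "\<alpha> (t (Suc k))"] by linarith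
      ultimately show ?thesis using yc[of k] yc[of "Suc k"] k
        unfolding step_dist_def dist_orb by (simp add: dist_commute)
    qed
  next
    show "inj_on c {..M}"
    proof (rule inj_onI, rule ccontr)
      fix i j assume ij: "i \<in> {..M}" "j \<in> {..M}" "c i = c j" "i \<noteq> j"
      have "\<bar>t i - t j\<bar> < spacing"
        using param_dist_lt_spacing[OF p t_ab t_ab, of i j "c i"] yc[of i] yc[of j] ij by auto
      moreover have "\<bar>t i - t j\<bar> = \<bar>real i - real j\<bar> * spacing"
        unfolding t_def using spacing_ge_1 by (simp add: abs_mult left_diff_distrib[symmetric])
      moreover have "\<bar>real i - real j\<bar> * spacing \<ge> 1 * spacing"
        using ij(4) spacing_ge_1 by (intro mult_right_mono) auto
      ultimately show False by linarith
    qed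
  qed
qed

lemma dist_base_return_le:
  assumes "h \<in> carrier G"
  shows "dist base (\<phi> (inv (g [^] m) \<otimes> (inv h \<otimes> g [^] n)) base)
    \<le> dist (orb m) z + dist (\<phi> h z) w + dist w (orb n)"
proof -
  have "\<phi> (inv (g [^] m) \<otimes> (inv h \<otimes> g [^] n)) base = \<phi> (inv (g [^] m)) (\<phi> (inv h) (orb n))"
    using assms unfolding orb_def by (simp add: act_mult)
  then have "dist base (\<phi> (inv (g [^] m) \<otimes> (inv h \<otimes> g [^] n)) base) = dist (orb m) (\<phi> (inv h) (orb n))"
    using dist_act[of "g [^] m" base "\<phi> (inv (g [^] m)) (\<phi> (inv h) (orb n))"] unfolding orb_def by simp
  also have "\<dots> \<le> dist (orb m) z + dist z (\<phi> (inv h) (orb n))" by (rule dist_triangle)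
  also have "dist z (\<phi> (inv h) (orb n)) = dist (\<phi> h z) (orb n)"
    using dist_act[OF assms, of z "\<phi> (inv h) (orb n)"] assms by simp
  also have "\<dots> \<le> dist (\<phi> h z) w + dist w (orb n)" by (rule dist_triangle)
  finally show ?thesis by simp
qed

text \<open>Pigeonhole: with \<open>h\<^sub>i \<in> H\<close> moving \<open>y 0\<close> close to \<open>y i\<close>, the elements
  \<open>g\<^bsup>-c 0\<^esup> h\<^sub>i\<^sup>-\<^sup>1 g\<^bsup>c i\<^esup>\<close> move \<open>base\<close> a bounded amount, so two of them coincide,
  which exhibits a power of \<open>g\<close> in \<open>H\<close>.\<close>
lemma chain_period_in_subgroup:
  assumes qcs: "quasi_convex_subgroup G \<phi> \<Gamma> \<eta> H Y"
    and chain: "\<And>i. i \<le> M \<Longrightarrow> y i \<in> Y \<and> dist (y i) (orb (c i)) \<le> C"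
    and M: "card {f \<in> carrier G. dist base (\<phi> f base) \<le> 2 * C + \<eta>} \<le> M"
  obtains i i' where "i < i'" "i' \<le> M" "g [^] (c i' - c i) \<in> H"
proof -
  have sg: "subgroup H G" and cob: "\<forall>y\<in>Y. \<forall>y'\<in>Y. \<exists>h\<in>H. dist y (\<phi> h y') \<le> \<eta>"
    using qcs unfolding quasi_convex_subgroup_def by auto
  have HC: "h \<in> H \<Longrightarrow> h \<in> carrier G" for h using subgroup.mem_carrier[OF sg] .
  have "\<exists>h\<in>H. dist (y i) (\<phi> h (y 0)) \<le> \<eta>" if "i \<le> M" for i
    using cob chain[OF that] chain[of 0] by blast
  then obtain h where h: "\<And>i. i \<le> M \<Longrightarrow> h i \<in> H \<and> dist (y i) (\<phi> (h i) (y 0)) \<le> \<eta>"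
    by metis
  define f where "f i = inv (g [^] c 0) \<otimes> (inv (h i) \<otimes> g [^] c i)" for i
  define F where "F = {f \<in> carrier G. dist base (\<phi> f base) \<le> 2 * C + \<eta>}"
  have f_in_F: "f i \<in> F" if i: "i \<le> M" for i
  proof -
    have hC: "h i \<in> carrier G" using h[OF i] HC by blast
    have "dist base (\<phi> (f i) base) \<le> 2 * C + \<eta>"
      using dist_base_return_le[OF hC, where m = "c 0" and n = "c i" and z = "y 0" and w = "y i"] chain[of 0] chain[OF i] h[OF i]
      unfolding f_def by (simp add: dist_commute)
    then show ?thesis unfolding F_def f_def using hC by simp
  qed
  have "\<not> inj_on f {..M}"
  proof
    assume "inj_on f {..M}"
    then have "card {..M} \<le> card F"
      using f_in_F finite_displacement unfolding F_def by (intro card_inj_on_le) auto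
    then show False using M unfolding F_def by simp
  qed
  then obtain i i' where ii': "i < i'" "i' \<le> M" "f i = f i'"
    unfolding inj_on_def by (metis atMost_iff linorder_neqE_nat)
  have hC: "h i \<in> carrier G" "h i' \<in> carrier G" using h ii' HC by auto
  have "inv (h i') \<otimes> g [^] c i' = inv (h i) \<otimes> g [^] c i"
    using ii'(3) hC unfolding f_def by simp
  then have "g [^] c i' = h i' \<otimes> inv (h i) \<otimes> g [^] c i"
    using hC by (simp add: inv_solve_left' m_assoc)
  then have "g [^] (c i' - c i) = h i' \<otimes> inv (h i)"
    using hC by (simp add: int_pow_diff m_assoc)
  moreover have "h i' \<otimes> inv (h i) \<in> H"
    using h ii' sg by (simp add: subgroup.m_closed subgroup.m_inv_closed)
  ultimately show ?thesis using that ii'(1,2) by simp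
qed

definition chain_length where
  "chain_length \<eta> = card {f \<in> carrier G. dist base (\<phi> f base) \<le> 2 * chain_dist \<eta> + \<eta>}"

definition far_threshold where
  "far_threshold \<eta> = max min_sep (real (chain_length \<eta>) * spacing + 2 * \<delta>)"

definition cover_dist where
  "cover_dist \<eta> = \<delta> + orbit_spread (max_step step_dist) + chain_dist \<eta>"

lemma A_near_Y_if_far_projections:
  assumes qcs: "quasi_convex_subgroup G \<phi> \<Gamma> \<eta> H Y"
    and y: "y1 \<in> Y" "y2 \<in> Y" "dist (\<pi> y1) (\<pi> y2) > far_threshold \<eta>"
  shows "A \<subseteq> nbhd Y (cover_dist \<eta>)"
proof -
  have sg: "subgroup H G" and HY: "\<forall>h\<in>H. \<phi> h ` Y \<subseteq> Y" and qc: "quasi_convex \<Gamma> \<eta> Y"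
    using qcs unfolding quasi_convex_subgroup_def by auto
  obtain a b \<alpha> where p: "(a, b, \<alpha>) \<in> \<Gamma>" "\<alpha> a = y1" "\<alpha> b = y2" by (rule obtain_path)
  obtain s u where su: "a \<le> s" "s \<le> u" "u \<le> b" "u - s \<ge> far_threshold \<eta> - 2 * \<delta>"
    and track: "\<And>t. s \<le> t \<Longrightarrow> t \<le> u \<Longrightarrow> \<exists>a'\<in>A. dist (\<alpha> t) a' \<le> track_dist"
    using tracking_segment[OF p(1), of "far_threshold \<eta>"] p(2,3) y(3)
    unfolding far_threshold_def by auto
  have "path_image_of (a, b, \<alpha>) \<subseteq> nbhd Y \<eta>"
    using qc p y unfolding quasi_convex_def joins_def by blast
  then have near_Y: "\<alpha> t \<in> nbhd Y \<eta>" if "s \<le> t" "t \<le> u" for t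
    using that su unfolding path_image_of_def by auto
  have "real (chain_length \<eta>) * spacing \<le> u - s" using su(4) unfolding far_threshold_def by linarith
  then obtain c y where chain: "\<And>i. i \<le> chain_length \<eta> \<Longrightarrow> y i \<in> Y \<and> dist (y i) (orb (c i)) \<le> chain_dist \<eta>"
    and steps: "\<And>k. k < chain_length \<eta> \<Longrightarrow> dist base (orb (c (Suc k) - c k)) \<le> step_dist"
    and inj: "inj_on c {..chain_length \<eta>}"
    by (rule sample_orbit_chain[OF p(1) su(1,3) _ track near_Y]) blast+
  obtain i i' where ii': "i < i'" "i' \<le> chain_length \<eta>" "g [^] (c i' - c i) \<in> H"
    by (rule chain_period_in_subgroup[OF qcs chain]) (auto simp: chain_length_def)
  define c' where "c' j = c (i + j)" for j
  show ?thesis unfolding cover_dist_def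
  proof (rule A_near_Y_of_periodic_chain[OF sg HY])
    show "\<exists>y\<in>Y. dist y (orb (c' k)) \<le> chain_dist \<eta>" if "k \<le> i' - i" for k
    proof -
      have "i + k \<le> chain_length \<eta>" using that ii'(1,2) by linarith
      then show ?thesis using chain unfolding c'_def by blast
    qed
    show "dist base (orb (c' (Suc k) - c' k)) \<le> step_dist" if "k < i' - i" for k
      using steps[of "i + k"] that ii'(2) unfolding c'_def by simp
    show "c' (i' - i) \<noteq> c' 0"
      using inj ii'(1,2) unfolding c'_def inj_on_def by fastforce
    show "g [^] (c' (i' - i) - c' 0) \<in> H" using ii' unfolding c'_def by simp
  qed
qed

lemma translate_A_near_Y_if_diam_large:
  assumes R: "coset_representatives G \<phi> A R" and qcs: "quasi_convex_subgroup G \<phi> \<Gamma> \<eta> H Y"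
    and u: "u \<in> carrier G" and big: "diam_proj G \<phi> A \<pi> R u Y > ereal (far_threshold \<eta>)"
  shows "\<phi> u ` A \<subseteq> nbhd Y (cover_dist \<eta>)"
proof -
  obtain u0 where u0: "u0 \<in> carrier G" "\<phi> u0 ` A = \<phi> u ` A"
    and tm: "\<And>x. translated_map G \<phi> A \<pi> R u x = \<phi> u0 (\<pi> (\<phi> (inv u0) x))"
    by (rule translated_map_eq[OF R u, where \<pi> = \<pi>]) blast
  define Y' where "Y' = \<phi> (inv u0) ` Y"
  obtain x1 x2 where x: "x1 \<in> Y" "x2 \<in> Y"
    "ereal (far_threshold \<eta>) < ereal (dist (translated_map G \<phi> A \<pi> R u x1) (translated_map G \<phi> A \<pi> R u x2))"
    using big unfolding diam_proj_def ediam_def less_SUP_iff by auto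
  then have "dist (\<pi> (\<phi> (inv u0) x1)) (\<pi> (\<phi> (inv u0) x2)) > far_threshold \<eta>"
    using tm u0(1) by simp
  moreover have "quasi_convex_subgroup G \<phi> \<Gamma> \<eta> (inv u0 <# H #> inv (inv u0)) Y'"
    unfolding Y'_def using quasi_convex_subgroup_translate[OF qcs inv_closed[OF u0(1)]] by simp
  ultimately have A_near: "A \<subseteq> nbhd Y' (cover_dist \<eta>)"
    using A_near_Y_if_far_projections x(1,2) unfolding Y'_def by blast
  have Y: "\<phi> u0 ` Y' = Y" unfolding Y'_def using u0(1) by (simp add: image_image)
  show ?thesis
  proof
    fix z assume "z \<in> \<phi> u ` A"
    then obtain x where "x \<in> A" "z = \<phi> u0 x" using u0(2) by blast
    then show "z \<in> nbhd Y (cover_dist \<eta>)" using A_near nbhd_act_iff[OF u0(1)] Y by auto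
  qed
qed

definition coset_bound where
  "coset_bound \<eta> = card {f \<in> carrier G. dist base (\<phi> f base) \<le> 2 * cover_dist \<eta> + 2 + \<eta>}"

definition theta where
  "theta \<eta> = max (max 1 (cover_dist \<eta>)) (max (far_threshold \<eta>) (real (coset_bound \<eta>)))"

lemma one_le_theta: "1 \<le> theta \<eta>"
  unfolding theta_def by simp

lemma far_threshold_le_theta: "ereal (far_threshold \<eta>) \<le> ereal (theta \<eta>)"
proof -
  have "far_threshold \<eta> \<le> theta \<eta>" unfolding theta_def by simp
  then show ?thesis by simp
qed

lemma translate_A_near_Y_if_diam_gt_theta:
  assumes R: "coset_representatives G \<phi> A R" and qcs: "quasi_convex_subgroup G \<phi> \<Gamma> \<eta> H Y"
    and u: "u \<in> carrier G" and big: "diam_proj G \<phi> A \<pi> R u Y > ereal (theta \<eta>)"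
  shows "\<phi> u ` A \<subseteq> nbhd Y (theta \<eta>)"
proof -
  have "\<phi> u ` A \<subseteq> nbhd Y (cover_dist \<eta>)"
    by (rule translate_A_near_Y_if_diam_large[OF R qcs u order_le_less_trans[OF far_threshold_le_theta big]])
  moreover have "nbhd Y (cover_dist \<eta>) \<subseteq> nbhd Y (theta \<eta>)"
    by (rule nbhd_mono) (simp add: theta_def)
  ultimately show ?thesis by blast
qed

lemma exists_small_diam_if_index_gt_theta:
  assumes R: "coset_representatives G \<phi> A R" and qcs: "quasi_convex_subgroup G \<phi> \<Gamma> \<eta> H Y"
    and K: "subgroup K G" and index: "subgroup_index G K H > enat (nat \<lfloor>theta \<eta>\<rfloor>)"
  shows "\<exists>k\<in>K. diam_proj G \<phi> A \<pi> R k Y \<le> ereal (theta \<eta>)"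
proof (rule ccontr)
  assume "\<not> ?thesis"
  then have big: "diam_proj G \<phi> A \<pi> R k Y > ereal (far_threshold \<eta>)" if "k \<in> K" for k
    using that order_le_less_trans[OF far_threshold_le_theta] by (auto simp: not_le)
  have "\<phi> k base \<in> nbhd Y (cover_dist \<eta>)" if "k \<in> K" for k
    using translate_A_near_Y_if_diam_large[OF R qcs subgroup.mem_carrier[OF K that] big[OF that]]
      base_in_A by blast
  then have "subgroup_index G K H \<le> coset_bound \<eta>"
    unfolding coset_bound_def by (rule subgroup_index_le_card_displacement[OF qcs K])
  also have "coset_bound \<eta> \<le> nat \<lfloor>theta \<eta>\<rfloor>"
    unfolding theta_def by (simp add: le_nat_floor)
  finally show False using index by simp
qed

end

theorem mainTheorem14:
  fixes G :: "('g, 'b) monoid_scheme" and \<phi> :: "'g \<Rightarrow> 'x::metric_space \<Rightarrow> 'x"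
    and \<Gamma> :: "'x path set" and \<mu> \<nu> \<delta> :: real
    and g :: 'g and A :: "'x set" and \<pi>A :: "'x \<Rightarrow> 'x" and R :: "'g set"
  assumes "path_system_group G \<phi> \<Gamma> \<mu> \<nu>"
    and "constricting_element G \<phi> \<Gamma> \<delta> g A \<pi>A"
    and "coset_representatives G \<phi> A R"
  shows "\<forall>\<eta>\<ge>0. \<exists>\<theta>\<ge>1. \<forall>H Y. quasi_convex_subgroup G \<phi> \<Gamma> \<eta> H Y \<longrightarrow>
           (\<forall>u\<in>carrier G. diam_proj G \<phi> A \<pi>A R u Y > ereal \<theta> \<longrightarrow> \<phi> u ` A \<subseteq> nbhd Y \<theta>) \<and>
           (\<forall>K. subgroup K G \<longrightarrow> H \<subseteq> K \<longrightarrow> subgroup_index G K H > enat (nat \<lfloor>\<theta>\<rfloor>) \<longrightarrow>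
              (\<exists>k\<in>K. diam_proj G \<phi> A \<pi>A R k Y \<le> ereal \<theta>))"
proof -
  interpret constricting_system G \<phi> \<Gamma> \<mu> \<nu> \<delta> g A \<pi>A
    using assms(1,2) by unfold_locales
  show ?thesis
    by (intro allI impI exI[of _ "theta _"] conjI ballI one_le_theta
        translate_A_near_Y_if_diam_gt_theta[OF assms(3)] exists_small_diam_if_index_gt_theta[OF assms(3)])
qed

end
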